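(* Let $n\ge1$ and $1\le k\le n$ be integers. Then $$|\mathrm{SVT}((1^k),n)|=\binom{n}{k}\,{}_2F_1\!\left(\begin{matrix}k,\;k-n\\ k+1\end{matrix};-1\right).$$
   Context: Let $[n]=\{1,\dots,n\}$. For a partition $\lambda$ with at most $n$ nonzero parts, identified with its Young diagram $\{(i,j): 1\le j\le\lambda_i\}$ (row index $i$ increasing downward, column index $j$ to the right), a set-valued tableau of shape $\lambda$ with entries in $[n]$ assigns to every box $(i,j)$ a nonempty subset $T_{i,j}\subseteq[n]$ such that $\max T_{i,j}\le\min T_{i,j+1}$ and $\max T_{i,j}<\min T_{i+1,j}$ whenever these boxes exist; $\mathrm{SVT}(\lambda,n)$ is the set of these tableaux, and $(1^k)$ is the one-column partition with $k$ boxes. $(a)_0=1$, $(a)_m=a(a+1)\cdots(a+m-1)$, and ${}_2F_1\!\left(\begin{smallmatrix}a,\,b\\ c\end{smallmatrix};z\right)=\sum_{m\ge0}\frac{(a)_m(b)_m}{(c)_m}\frac{z^m}{m!}$, a finite sum when $b$ is a nonpositive integer. *)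

theory Defs
  imports Complex_Main
begin

text \<open>A partition is given as the list of its nonzero parts (weakly decreasing).
  Its Young diagram uses 1-based row index i and column index j.\<close>

definition young_diagram :: "nat list \<Rightarrow> (nat \<times> nat) set" where
  "young_diagram lam = {(i, j). 1 \<le> i \<and> i \<le> length lam \<and> 1 \<le> j \<and> j \<le> lam ! (i - 1)}"

text \<open>Set-valued tableaux of shape lam with entries in [n]. Outside the diagram
  the filling is fixed to the empty set, so tableaux are determined by their
  values on the boxes.\<close>

definition SVT :: "nat list \<Rightarrow> nat \<Rightarrow> (nat \<times> nat \<Rightarrow> nat set) set" where
  "SVT lam n = {T.
     (\<forall>b \<in> young_diagram lam. T b \<noteq> {} \<and> T b \<subseteq> {1..n}) \<and>
     (\<forall>b. b \<notin> young_diagram lam \<longrightarrow> T b = {}) \<and>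
     (\<forall>i j. (i, j) \<in> young_diagram lam \<and> (i, j + 1) \<in> young_diagram lam
            \<longrightarrow> Max (T (i, j)) \<le> Min (T (i, j + 1))) \<and>
     (\<forall>i j. (i, j) \<in> young_diagram lam \<and> (i + 1, j) \<in> young_diagram lam
            \<longrightarrow> Max (T (i, j)) < Min (T (i + 1, j)))}"

text \<open>Gauss hypergeometric series 2F1(a,b;c;z) (a finite sum when b is a
  nonpositive integer, since then all terms with m > -b vanish).\<close>

definition hyp2f1 :: "real \<Rightarrow> real \<Rightarrow> real \<Rightarrow> real \<Rightarrow> real" where
  "hyp2f1 a b c z = (\<Sum>m. pochhammer a m * pochhammer b m / pochhammer c m * z ^ m / fact m)"

end

theory Submission
  imports Defs
begin

text \<open>A one-column set-valued tableau is a chain of nonempty blocks T 1, ..., T k in [n] with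
  every entry of T i below every entry of T (i + 1). The solution is
  c(k, n) = sum over m of C(n, m) C(m - 1, k - 1) (choose the union of the blocks, then cut it into
  k runs), and the identity C(n, k + j) C(k - 1 + j, k - 1) = C(n, k) C(n - k, j) k / (k + j)
  turns this into C(n, k) times the terminating series 2F1(k, k - n; k + 1; -1).\<close>

definition block_chains :: "nat \<Rightarrow> nat \<Rightarrow> (nat \<Rightarrow> nat set) set" where
  "block_chains k n = {T. (\<forall>i. T i \<noteq> {} \<longleftrightarrow> i \<in> {1..k}) \<and> (\<forall>i. T i \<subseteq> {1..n})
     \<and> (\<forall>i. \<forall>x\<in>T i. \<forall>y\<in>T (Suc i). x < y)}"

lemma Max_less_Min_iff:
  fixes A B :: "'a::linorder set"
  assumes "finite A" "A \<noteq> {}" "finite B" "B \<noteq> {}"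
  shows "Max A < Min B \<longleftrightarrow> (\<forall>x\<in>A. \<forall>y\<in>B. x < y)"
  using assms by (auto simp: Max_less_iff Min_gr_iff)

lemma
  assumes "T \<in> block_chains k n"
  shows block_nonempty_iff: "T i \<noteq> {} \<longleftrightarrow> i \<in> {1..k}"
    and block_subset: "T i \<subseteq> {1..n}"
    and block_less: "x \<in> T i \<Longrightarrow> y \<in> T (Suc i) \<Longrightarrow> x < y"
  using assms unfolding block_chains_def by blast+

lemma block_chainsI:
  assumes "\<And>i. T i \<noteq> {} \<longleftrightarrow> i \<in> {1..k}" and "\<And>i. T i \<subseteq> {1..n}"
    and "\<And>i x y. x \<in> T i \<Longrightarrow> y \<in> T (Suc i) \<Longrightarrow> x < y"
  shows "T \<in> block_chains k n"
  using assms unfolding block_chains_def by blast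

lemma block_le: "T \<in> block_chains k n \<Longrightarrow> x \<in> T i \<Longrightarrow> x \<le> n"
  using block_subset by fastforce

lemma finite_block: "T \<in> block_chains k n \<Longrightarrow> finite (T i)"
  by (rule finite_subset[OF block_subset]) simp_all

lemma young_diagram_column: "young_diagram (replicate k 1) = {1..k} \<times> {1}"
  unfolding young_diagram_def by auto

lemma bij_betw_SVT_column_block_chains:
  "bij_betw (\<lambda>T i. T (i, 1)) (SVT (replicate k 1) n) (block_chains k n)"
proof (rule bij_betw_byWitness[where f' = "\<lambda>S (i, j). if j = 1 then S i else {}"])
  show "\<forall>T\<in>SVT (replicate k 1) n. (\<lambda>(i, j). if j = 1 then T (i, 1) else {}) = T"
    unfolding SVT_def young_diagram_column by (auto simp: fun_eq_iff)
  show "\<forall>S\<in>block_chains k n. (\<lambda>i. case (i, 1) of (i, j) \<Rightarrow> if j = 1 then S i else {}) = S"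
    by simp
  show "(\<lambda>T i. T (i, 1)) ` SVT (replicate k 1) n \<subseteq> block_chains k n"
  proof clarify
    fix T assume "T \<in> SVT (replicate k 1) n"
    then have box: "\<And>i. i \<in> {1..k} \<Longrightarrow> T (i, 1) \<noteq> {} \<and> T (i, 1) \<subseteq> {1..n}"
      and outside: "\<And>i. i \<notin> {1..k} \<Longrightarrow> T (i, 1) = {}"
      and below: "\<And>i. i \<in> {1..k} \<Longrightarrow> Suc i \<in> {1..k} \<Longrightarrow> Max (T (i, 1)) < Min (T (Suc i, 1))"
      unfolding SVT_def young_diagram_column by auto
    have "\<forall>x\<in>T (i, 1). \<forall>y\<in>T (Suc i, 1). x < y" for i
    proof (cases "i \<in> {1..k} \<and> Suc i \<in> {1..k}")
      case True
      with box have "finite (T (i, 1))" "T (i, 1) \<noteq> {}" "finite (T (Suc i, 1))" "T (Suc i, 1) \<noteq> {}"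
        by (meson finite_atLeastAtMost finite_subset)+
      with True below show ?thesis
        using Max_less_Min_iff by blast
    next
      case False
      with outside show ?thesis by auto
    qed
    with box outside show "(\<lambda>i. T (i, 1)) \<in> block_chains k n"
      unfolding block_chains_def by blast
  qed
  show "(\<lambda>S (i, j). if j = 1 then S i else {}) ` block_chains k n \<subseteq> SVT (replicate k 1) n"
  proof clarify
    fix S assume S: "S \<in> block_chains k n"
    have "Max (S i) < Min (S (Suc i))" if "i \<in> {1..k}" "Suc i \<in> {1..k}" for i
      using finite_block[OF S] block_nonempty_iff[OF S] block_less[OF S] that
      by (simp add: Max_less_Min_iff)
    with block_nonempty_iff[OF S] block_subset[OF S] show "(\<lambda>(i, j). if j = 1 then S i else {}) \<in> SVT (replicate k 1) n"
      unfolding SVT_def young_diagram_column by auto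
  qed
qed

lemma finite_block_chains: "finite (block_chains k n)"
proof -
  have "block_chains k n \<subseteq>
      {T. \<forall>i. (i \<in> {1..k} \<longrightarrow> T i \<in> Pow {1..n}) \<and> (i \<notin> {1..k} \<longrightarrow> T i = {})}"
    unfolding block_chains_def by auto
  then show ?thesis
    by (rule finite_subset) (intro finite_set_of_finite_funs; simp)
qed

lemma block_chains_0: "block_chains 0 n = {\<lambda>_. {}}"
  unfolding block_chains_def by auto

lemma block_chains_Suc_0: "block_chains (Suc k) 0 = {}"
  unfolding block_chains_def by force

lemma top_entry_in_last_block:
  assumes T: "T \<in> block_chains k (Suc n)" and top: "Suc n \<in> T i"
  shows "i = k"
proof (rule ccontr)
  assume "i \<noteq> k"
  moreover from top have "i \<in> {1..k}"
    using block_nonempty_iff[OF T] by blast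
  ultimately have "T (Suc i) \<noteq> {}"
    using block_nonempty_iff[OF T] by simp
  then obtain y where y: "y \<in> T (Suc i)" by blast
  with top have "Suc n < y"
    by (rule block_less[OF T])
  moreover from y have "y \<le> Suc n"
    by (rule block_le[OF T])
  ultimately show False by simp
qed

lemma block_chains_mono:
  assumes "n \<le> m"
  shows "block_chains k n \<subseteq> block_chains k m"
proof
  fix T assume T: "T \<in> block_chains k n"
  have "T i \<subseteq> {1..m}" for i
    by (rule subset_trans[OF block_subset[OF T]]) (use assms in auto)
  then show "T \<in> block_chains k m"
    using T by (intro block_chainsI) (auto simp: block_nonempty_iff block_less)
qed

lemma block_chains_avoiding_top:
  "{T \<in> block_chains k (Suc n). Suc n \<notin> T k} = block_chains k n"
proof (intro equalityI subsetI)
  fix T assume "T \<in> {T \<in> block_chains k (Suc n). Suc n \<notin> T k}"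
  then have T: "T \<in> block_chains k (Suc n)" and "Suc n \<notin> T k" by auto
  then have top_absent: "Suc n \<notin> T i" for i
    using top_entry_in_last_block by blast
  have "T i \<subseteq> {1..n}" for i
  proof
    fix x assume x: "x \<in> T i"
    then have "x \<in> {1..Suc n}"
      using block_subset[OF T] by blast
    with x top_absent show "x \<in> {1..n}"
      by (auto simp: le_Suc_eq)
  qed
  then show "T \<in> block_chains k n"
    using T by (intro block_chainsI) (auto simp: block_nonempty_iff block_less)
next
  fix T assume T: "T \<in> block_chains k n"
  then have "T \<in> block_chains k (Suc n)"
    using block_chains_mono[of n "Suc n"] by auto
  moreover have "Suc n \<notin> T k"
    using block_le[OF T] by fastforce
  ultimately show "T \<in> {T \<in> block_chains k (Suc n). Suc n \<notin> T k}" by simp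
qed

lemma remove_top_block_chains:
  assumes T: "T \<in> block_chains (Suc k) (Suc n)" and top: "Suc n \<in> T (Suc k)"
  shows "T(Suc k := T (Suc k) - {Suc n}) \<in> block_chains k n \<union> block_chains (Suc k) n"
    (is "?S \<in> _")
proof -
  have S_sub: "?S i \<subseteq> T i" for i
    by simp
  have "Suc n \<notin> ?S i" for i
    using top_entry_in_last_block[OF T, of i] by auto
  then have sub: "?S i \<subseteq> {1..n}" for i
    using S_sub block_subset[OF T, of i] by (fastforce simp: le_Suc_eq)
  have less: "x \<in> ?S i \<Longrightarrow> y \<in> ?S (Suc i) \<Longrightarrow> x < y" for i x y
    using S_sub block_less[OF T] by blast
  have nonempty: "?S i \<noteq> {} \<longleftrightarrow> i \<in> {1..k} \<or> (i = Suc k \<and> T (Suc k) \<noteq> {Suc n})" for i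
    using block_nonempty_iff[OF T, of i] top by auto
  show ?thesis
  proof (cases "T (Suc k) = {Suc n}")
    case True
    then have "?S \<in> block_chains k n"
      using sub less nonempty by (intro block_chainsI) auto
    then show ?thesis ..
  next
    case False
    then have "?S \<in> block_chains (Suc k) n"
      using sub less nonempty by (intro block_chainsI) auto
    then show ?thesis ..
  qed
qed

lemma insert_top_block_chains:
  assumes S: "S \<in> block_chains m n" and m: "m = k \<or> m = Suc k"
  shows "S(Suc k := insert (Suc n) (S (Suc k))) \<in> block_chains (Suc k) (Suc n)"
    (is "?T \<in> _")
proof (rule block_chainsI)
  fix i
  show "?T i \<noteq> {} \<longleftrightarrow> i \<in> {1..Suc k}"
    using block_nonempty_iff[OF S, of i] m by auto
  show "?T i \<subseteq> {1..Suc n}"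
    using block_subset[OF S, of i] by auto
next
  fix i x y assume x: "x \<in> ?T i" and y: "y \<in> ?T (Suc i)"
  have "i \<noteq> Suc k"
    using y block_nonempty_iff[OF S, of "Suc i"] m by auto
  show "x < y"
  proof (cases "i = k")
    case True
    with x y \<open>i \<noteq> Suc k\<close> have "x \<in> S i" "y = Suc n \<or> y \<in> S (Suc i)" by auto
    then show ?thesis
      using block_le[OF S] block_less[OF S] by fastforce
  next
    case False
    with x y \<open>i \<noteq> Suc k\<close> show ?thesis
      using block_less[OF S] by auto
  qed
qed

lemma bij_betw_remove_top:
  "bij_betw (\<lambda>T. T(Suc k := T (Suc k) - {Suc n}))
     {T \<in> block_chains (Suc k) (Suc n). Suc n \<in> T (Suc k)}
     (block_chains k n \<union> block_chains (Suc k) n)"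
proof (rule bij_betw_byWitness[where f' = "\<lambda>S. S(Suc k := insert (Suc n) (S (Suc k)))"])
  show "\<forall>T\<in>{T \<in> block_chains (Suc k) (Suc n). Suc n \<in> T (Suc k)}.
      (T(Suc k := T (Suc k) - {Suc n}))(Suc k := insert (Suc n) ((T(Suc k := T (Suc k) - {Suc n})) (Suc k))) = T"
    by (auto simp: fun_eq_iff)
  have "Suc n \<notin> S (Suc k)" if "S \<in> block_chains k n \<union> block_chains (Suc k) n" for S
    using that block_le by fastforce
  then show "\<forall>S\<in>block_chains k n \<union> block_chains (Suc k) n.
      (S(Suc k := insert (Suc n) (S (Suc k))))(Suc k := (S(Suc k := insert (Suc n) (S (Suc k)))) (Suc k) - {Suc n}) = S"
    by (auto simp: fun_eq_iff)
  show "(\<lambda>T. T(Suc k := T (Suc k) - {Suc n})) ` {T \<in> block_chains (Suc k) (Suc n). Suc n \<in> T (Suc k)}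
      \<subseteq> block_chains k n \<union> block_chains (Suc k) n"
    using remove_top_block_chains by auto
  show "(\<lambda>S. S(Suc k := insert (Suc n) (S (Suc k)))) ` (block_chains k n \<union> block_chains (Suc k) n)
      \<subseteq> {T \<in> block_chains (Suc k) (Suc n). Suc n \<in> T (Suc k)}"
    using insert_top_block_chains by auto
qed

lemma block_chains_Suc_disjoint: "block_chains k n \<inter> block_chains (Suc k) n = {}"
proof (intro equals0I)
  fix T assume "T \<in> block_chains k n \<inter> block_chains (Suc k) n"
  then have T: "T \<in> block_chains k n" and T': "T \<in> block_chains (Suc k) n" by auto
  show False
    using block_nonempty_iff[OF T, of "Suc k"] block_nonempty_iff[OF T', of "Suc k"] by simp
qed

lemma card_block_chains_Suc_Suc:
  "card (block_chains (Suc k) (Suc n)) = 2 * card (block_chains (Suc k) n) + card (block_chains k n)"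
proof -
  let ?C = "block_chains (Suc k) (Suc n)"
  have "card ?C = card ({T \<in> ?C. Suc n \<notin> T (Suc k)} \<union> {T \<in> ?C. Suc n \<in> T (Suc k)})"
    by (rule arg_cong[where f = card]) auto
  also have "\<dots> = card {T \<in> ?C. Suc n \<notin> T (Suc k)} + card {T \<in> ?C. Suc n \<in> T (Suc k)}"
    by (rule card_Un_disjoint) (auto simp: finite_block_chains)
  also have "card {T \<in> ?C. Suc n \<notin> T (Suc k)} = card (block_chains (Suc k) n)"
    by (simp only: block_chains_avoiding_top)
  also have "card {T \<in> ?C. Suc n \<in> T (Suc k)} = card (block_chains k n \<union> block_chains (Suc k) n)"
    by (rule bij_betw_same_card[OF bij_betw_remove_top])
  also have "\<dots> = card (block_chains k n) + card (block_chains (Suc k) n)"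
    by (rule card_Un_disjoint) (simp_all add: finite_block_chains block_chains_Suc_disjoint)
  finally show ?thesis by simp
qed

text \<open>block_chain_number k n counts chains of k + 1 blocks: choose the (m + 1)-element union
  of the blocks and cut it into k + 1 runs.\<close>

definition block_chain_number :: "nat \<Rightarrow> nat \<Rightarrow> nat" where
  "block_chain_number k n = (\<Sum>m<n. (n choose Suc m) * (m choose k))"

lemma block_chain_number_Suc:
  "block_chain_number k (Suc n)
     = block_chain_number k n + (0 choose k) + (\<Sum>m<n. (n choose Suc m) * (Suc m choose k))"
proof -
  have "block_chain_number k (Suc n)
      = (\<Sum>m<Suc n. (n choose m) * (m choose k)) + (\<Sum>m<Suc n. (n choose Suc m) * (m choose k))"
    unfolding block_chain_number_def by (simp add: sum.distrib algebra_simps)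
  also have "(\<Sum>m<Suc n. (n choose Suc m) * (m choose k)) = block_chain_number k n"
    unfolding block_chain_number_def by simp
  also have "(\<Sum>m<Suc n. (n choose m) * (m choose k))
      = (0 choose k) + (\<Sum>m<n. (n choose Suc m) * (Suc m choose k))"
    by (subst sum.lessThan_Suc_shift) simp
  finally show ?thesis by simp
qed

lemma block_chain_number_0_Suc: "block_chain_number 0 (Suc n) = 2 * block_chain_number 0 n + 1"
  using block_chain_number_Suc[of 0 n] unfolding block_chain_number_def by simp

lemma block_chain_number_Suc_Suc:
  "block_chain_number (Suc k) (Suc n) = 2 * block_chain_number (Suc k) n + block_chain_number k n"
  using block_chain_number_Suc[of "Suc k" n] unfolding block_chain_number_def
  by (simp add: sum.distrib algebra_simps)

lemma card_block_chains: "card (block_chains (Suc k) n) = block_chain_number k n"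
proof (induction n arbitrary: k)
  case 0
  then show ?case
    by (simp add: block_chains_Suc_0 block_chain_number_def)
next
  case (Suc n)
  then show ?case
  proof (cases k)
    case 0
    then show ?thesis
      using card_block_chains_Suc_Suc[of 0 n] Suc.IH block_chain_number_0_Suc block_chains_0 by simp
  next
    case (Suc k')
    then show ?thesis
      using card_block_chains_Suc_Suc[of k n] Suc.IH block_chain_number_Suc_Suc[of k' n] by simp
  qed
qed

lemma real_block_chain_number:
  assumes "1 \<le> k" "k \<le> n"
  shows "real (block_chain_number (k - 1) n)
    = real (n choose k) * (\<Sum>j\<le>n - k. real (n - k choose j) * real k / (real k + real j))"
proof -
  obtain k' where k': "k = Suc k'"
    using assms by (cases k) auto
  have "block_chain_number k' n = (\<Sum>m\<in>{k'..<n}. (n choose Suc m) * (m choose k'))"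
    unfolding block_chain_number_def by (rule sum.mono_neutral_right) auto
  also have "\<dots> = (\<Sum>j\<in>{0..<n - k'}. (n choose Suc (j + k')) * ((j + k') choose k'))"
    using sum.shift_bounds_nat_ivl[of "\<lambda>m. (n choose Suc m) * (m choose k')" 0 k' "n - k'"] assms k'
    by simp
  also have "{0..<n - k'} = {..n - k}"
    using assms k' by auto
  finally have sum_eq: "block_chain_number k' n = (\<Sum>j\<le>n - k. (n choose (k + j)) * ((k' + j) choose k'))"
    by (simp add: k' add.commute)
  have term_eq: "real ((n choose (k + j)) * ((k' + j) choose k'))
      = real (n choose k) * (real (n - k choose j) * real k / (real k + real j))" if "j \<le> n - k" for j
  proof -
    have subset_choose: "(n choose (k + j)) * ((k + j) choose k) = (n choose k) * (n - k choose j)"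
      using choose_mult[of k "k + j" n] that assms by simp
    have absorption: "k * ((k + j) choose k) = (k + j) * ((k' + j) choose k')"
      using Suc_times_binomial[of k' "k' + j"] k' by simp
    have "real ((n choose (k + j)) * ((k' + j) choose k')) * (real k + real j)
        = real ((n choose (k + j)) * (k * ((k + j) choose k)))"
      using absorption by (simp add: algebra_simps flip: of_nat_mult of_nat_add)
    also have "\<dots> = real k * real ((n choose k) * (n - k choose j))"
      using subset_choose by (simp add: algebra_simps flip: of_nat_mult)
    finally show ?thesis
      using assms by (simp add: field_simps)
  qed
  show ?thesis
    unfolding k' diff_Suc_1 sum_eq of_nat_sum sum_distrib_left
    by (rule sum.cong) (use term_eq k' in auto)
qed

lemma pochhammer_shift_ratio:
  fixes a :: real
  assumes "a > 0"
  shows "pochhammer a m / pochhammer (a + 1) m = a / (a + real m)"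
proof -
  have "pochhammer a m * (a + real m) = a * pochhammer (a + 1) m"
    using pochhammer_rec[of a m] pochhammer_rec'[of a m] by (simp add: mult.commute)
  moreover have "pochhammer (a + 1) m > 0"
    using assms by (intro pochhammer_pos) simp
  moreover have "a + real m > 0"
    using assms by simp
  ultimately show ?thesis
    by (simp add: divide_eq_eq eq_divide_eq)
qed

lemma hyp2f1_neg_nat_neg_one:
  fixes a :: real
  assumes "a > 0"
  shows "hyp2f1 a (- real N) (a + 1) (-1) = (\<Sum>j\<le>N. real (N choose j) * a / (a + real j))"
proof -
  have term_eq: "pochhammer a m * pochhammer (- real N) m / pochhammer (a + 1) m * (-1) ^ m / fact m
      = real (N choose m) * a / (a + real m)" for m
  proof -
    have "pochhammer a m * pochhammer (- real N) m / pochhammer (a + 1) m * (-1) ^ m / fact m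
        = (pochhammer a m / pochhammer (a + 1) m) * ((-1) ^ m * pochhammer (- real N) m / fact m)"
      by simp
    also have "(-1) ^ m * pochhammer (- real N) m / fact m = real (N choose m)"
      by (simp add: binomial_gbinomial gbinomial_pochhammer)
    finally show ?thesis
      unfolding pochhammer_shift_ratio[OF assms] by simp
  qed
  show ?thesis
    unfolding hyp2f1_def term_eq by (rule suminf_finite) auto
qed

theorem corollary3p4:
  fixes n k :: nat
  assumes "1 \<le> n" and "1 \<le> k" and "k \<le> n"
  shows "real (card (SVT (replicate k 1) n))
           = real (n choose k) * hyp2f1 (real k) (real k - real n) (real k + 1) (-1)"
proof -
  obtain k' where k': "k = Suc k'"
    using assms(2) by (cases k) auto
  have "card (SVT (replicate k 1) n) = card (block_chains k n)"
    by (rule bij_betw_same_card[OF bij_betw_SVT_column_block_chains])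
  also have "\<dots> = block_chain_number (k - 1) n"
    unfolding k' by (simp add: card_block_chains)
  finally have card_eq: "card (SVT (replicate k 1) n) = block_chain_number (k - 1) n" .
  have "real k - real n = - real (n - k)"
    using assms(3) by (simp add: of_nat_diff)
  then have "hyp2f1 (real k) (real k - real n) (real k + 1) (-1)
      = (\<Sum>j\<le>n - k. real (n - k choose j) * real k / (real k + real j))"
    using assms(2) by (simp only:) (rule hyp2f1_neg_nat_neg_one, simp)
  then show ?thesis
    unfolding card_eq real_block_chain_number[OF assms(2,3)] by simp
qed

end
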